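(* Let $t,d \ge 1$ (possibly depending on $n$) with $td^2 \in o(n/\log n)$. Then $$\log|\mathcal{G}_{t,d}| \;\ge\; (2dt-1)\, n \log n - \big[4n \log d + 2n \log t + 2n \log\log n + n\big]\,dt - 2n - O(\log n).$$
   Context: All logarithms are base 2. A graph $G$ on $n$ vertices has a $d$-dimensional $t$-representation if each vertex $v$ can be assigned a set of at most $t$ pairwise disjoint $d$-dimensional axis-parallel boxes (each box a product $[l_1,r_1]\times\cdots\times[l_d,r_d]$ of closed real intervals) such that two distinct vertices $u,v$ are adjacent if and only if some box assigned to $u$ intersects some box assigned to $v$. $\mathcal{G}_{t,d}$ denotes the class of unlabeled (i.e., up to isomorphism) $n$-vertex graphs that have a $d$-dimensional $t$-representation, and $|\mathcal{G}_{t,d}|$ its cardinality. *)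

theory Defs
  imports Complex_Main "HOL-Library.Landau_Symbols"
begin

definition box_set :: "nat \<Rightarrow> (nat \<Rightarrow> real) \<Rightarrow> (nat \<Rightarrow> real) \<Rightarrow> (nat \<Rightarrow> real) set" where
  "box_set d l r = {x. (\<forall>i<d. l i \<le> x i \<and> x i \<le> r i) \<and> (\<forall>i\<ge>d. x i = 0)}"

definition is_box :: "nat \<Rightarrow> (nat \<Rightarrow> real) set \<Rightarrow> bool" where
  "is_box d S \<longleftrightarrow> (\<exists>l r. (\<forall>i<d. l i \<le> r i) \<and> S = box_set d l r)"

definition graphs_on :: "nat \<Rightarrow> (nat \<times> nat) set set" where
  "graphs_on n = {E. E \<subseteq> {..<n} \<times> {..<n} \<and> sym E \<and> irrefl E}"

definition has_rep :: "nat \<Rightarrow> nat \<Rightarrow> nat \<Rightarrow> (nat \<times> nat) set \<Rightarrow> bool" where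
  "has_rep t d n E \<longleftrightarrow>
     (\<exists>B :: nat \<Rightarrow> (nat \<Rightarrow> real) set set.
        (\<forall>v<n. finite (B v) \<and> card (B v) \<le> t \<and> (\<forall>b\<in>B v. is_box d b) \<and> pairwise disjnt (B v)) \<and>
        (\<forall>u<n. \<forall>v<n. u \<noteq> v \<longrightarrow>
            ((u, v) \<in> E \<longleftrightarrow> (\<exists>b\<in>B u. \<exists>b'\<in>B v. b \<inter> b' \<noteq> {}))))"

definition graph_iso :: "nat \<Rightarrow> (nat \<times> nat) set \<Rightarrow> (nat \<times> nat) set \<Rightarrow> bool" where
  "graph_iso n E E' \<longleftrightarrow>
     (\<exists>f. bij_betw f {..<n} {..<n} \<and> (\<forall>u<n. \<forall>v<n. (u, v) \<in> E \<longleftrightarrow> (f u, f v) \<in> E'))"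

definition rep_graphs :: "nat \<Rightarrow> nat \<Rightarrow> nat \<Rightarrow> (nat \<times> nat) set set" where
  "rep_graphs t d n = {E \<in> graphs_on n. has_rep t d n E}"

definition num_G :: "nat \<Rightarrow> nat \<Rightarrow> nat \<Rightarrow> nat" where
  "num_G t d n = card (rep_graphs t d n //
     {(E, E'). E \<in> rep_graphs t d n \<and> E' \<in> rep_graphs t d n \<and> graph_iso n E E'})"

end

(*
  Take m ~ n / (d log n), m' ~ m/4 and two layers of R^d separated in the first coordinate.
  The d m' upper probes are the degenerate slabs {x_i = p} (i < d, p < m') of the upper layer,
  the d m lower probes the slabs {x_i = p} (p < m) of the lower layer.  Every other vertex gets
  t boxes in the lower layer, every lower probe t - 1 boxes in the upper layer: the k-th box is
  the product over i of the k-th interval cut out by a set of 2t (resp. 2t - 2) points of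
  {0..<m} (resp. {0..<m'}) chosen for direction i.  Such a box meets {x_i = p} iff p lies in its
  i-th interval, so the graph determines all choices.  This gives
  (m choose 2t)^(d (n - dm - dm')) (m' choose 2t-2)^(d^2 m) labelled graphs; dividing by n! for
  isomorphism and estimating binomials and factorials (a Stirling-type bound) yields the claim.
*)

theory Submission
  imports Defs "HOL-Library.FuncSet" "HOL-Combinatorics.Permutations" "HOL-Analysis.Harmonic_Numbers"
begin

lemma box_set_Int_nonempty_iff:
  assumes "\<forall>i<d. l i \<le> r i" and "\<forall>i<d. l' i \<le> r' i"
  shows "box_set d l r \<inter> box_set d l' r' \<noteq> {} \<longleftrightarrow> (\<forall>i<d. l i \<le> r' i \<and> l' i \<le> r i)"
proof
  assume "box_set d l r \<inter> box_set d l' r' \<noteq> {}"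
  then show "\<forall>i<d. l i \<le> r' i \<and> l' i \<le> r i"
    unfolding box_set_def by force
next
  assume overlap: "\<forall>i<d. l i \<le> r' i \<and> l' i \<le> r i"
  define x where "x = (\<lambda>i. if i < d then max (l i) (l' i) else 0)"
  have "x \<in> box_set d l r \<inter> box_set d l' r'"
    using overlap assms unfolding box_set_def x_def by auto
  then show "box_set d l r \<inter> box_set d l' r' \<noteq> {}" by blast
qed

lemma is_box_box_set: "\<forall>i<d. l i \<le> r i \<Longrightarrow> is_box d (box_set d l r)"
  unfolding is_box_def by blast

lemma box_set_coord0_bounds:
  "0 < d \<Longrightarrow> x \<in> box_set d l r \<Longrightarrow> l 0 \<le> x 0 \<and> x 0 \<le> r 0"
  unfolding box_set_def by auto

lemma box_set_disjoint_coord0: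
  assumes "0 < d" and "r 0 < l' 0"
  shows "box_set d l r \<inter> box_set d l' r' = {}"
  using box_set_coord0_bounds[OF assms(1)] assms(2) by (meson disjoint_iff not_le order.trans)

lemma nth_sorted_list_of_set_le_iff:
  assumes "finite C" and "i < card C"
  shows "sorted_list_of_set C ! i \<le> p \<longleftrightarrow> i < card {c\<in>C. c \<le> p}"
proof -
  define s where "s = sorted_list_of_set C"
  have len: "length s = card C" and set_s: "set s = C" and sorted: "sorted s" and "distinct s"
    using assms(1) by (simp_all add: s_def)
  have inj: "inj_on ((!) s) {..<card C}"
    using \<open>distinct s\<close> len by (simp add: inj_on_nth)
  have "s ! i \<le> p \<longleftrightarrow> i < card {c\<in>C. c \<le> p}"
  proof
    assume "s ! i \<le> p"
    then have "(!) s ` {..i} \<subseteq> {c\<in>C. c \<le> p}"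
      using sorted len assms(2) set_s by (auto intro: order.trans[OF sorted_nth_mono])
    moreover have "card ((!) s ` {..i}) = Suc i"
      using assms(2) by (subst card_image[OF inj_on_subset[OF inj]]) auto
    moreover have "finite {c\<in>C. c \<le> p}"
      using assms(1) by simp
    ultimately show "i < card {c\<in>C. c \<le> p}"
      by (metis Suc_le_eq card_mono)
  next
    assume "i < card {c\<in>C. c \<le> p}"
    show "s ! i \<le> p"
    proof (rule ccontr)
      assume "\<not> s ! i \<le> p"
      have "{c\<in>C. c \<le> p} \<subseteq> (!) s ` {..<i}"
      proof
        fix c assume c: "c \<in> {c\<in>C. c \<le> p}"
        then obtain j where "j < card C" "s ! j = c"
          using set_s len by (auto simp: in_set_conv_nth)
        moreover have "\<not> i \<le> j"
          using \<open>\<not> s ! i \<le> p\<close> c \<open>s ! j = c\<close> len \<open>j < card C\<close> sorted_nth_mono[OF sorted, of i j]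
          by auto
        ultimately show "c \<in> (!) s ` {..<i}" by auto
      qed
      then have "card {c\<in>C. c \<le> p} \<le> i"
        using card_mono[OF finite_imageI[OF finite_lessThan]] card_image_le[OF finite_lessThan, of "(!) s" i]
        by fastforce
      with \<open>i < card {c\<in>C. c \<le> p}\<close> show False by simp
    qed
  qed
  then show ?thesis by (simp add: s_def)
qed

definition interval_union :: "nat \<Rightarrow> nat set \<Rightarrow> nat set" where
  "interval_union k C =
     {p. \<exists>j<k. sorted_list_of_set C ! (2*j) \<le> p \<and> p < sorted_list_of_set C ! (2*j+1)}"

definition interval_codes :: "nat \<Rightarrow> nat \<Rightarrow> nat set set" where
  "interval_codes M k = {C. C \<subseteq> {..<M} \<and> card C = 2*k}"

lemma card_interval_codes: "card (interval_codes M k) = M choose (2*k)"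
  unfolding interval_codes_def using n_subsets[of "{..<M}" "2*k"] by simp

lemma interval_codes_finite: "C \<in> interval_codes M k \<Longrightarrow> finite C"
  unfolding interval_codes_def using finite_subset by blast

lemma interval_codes_nth_less:
  assumes "C \<in> interval_codes M k" and "i < i'" and "i' < 2*k"
  shows "sorted_list_of_set C ! i < sorted_list_of_set C ! i'"
proof -
  have "sorted_wrt (<) (sorted_list_of_set C)"
    using interval_codes_finite[OF assms(1)] by (simp add: sorted_list_of_set.strict_sorted_key_list_of_set)
  moreover have "i' < length (sorted_list_of_set C)"
    using assms interval_codes_finite[OF assms(1)] unfolding interval_codes_def by simp
  ultimately show ?thesis
    using assms(2) by (simp add: sorted_wrt_nth_less)
qed

lemma interval_codes_nth_bound:
  assumes "C \<in> interval_codes M k" and "i < 2*k"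
  shows "sorted_list_of_set C ! i < M"
proof -
  have "finite C" "card C = 2*k"
    using interval_codes_finite[OF assms(1)] assms(1) by (simp_all add: interval_codes_def)
  then have "sorted_list_of_set C ! i \<in> set (sorted_list_of_set C)"
    using assms(2) by (intro nth_mem) simp
  then have "sorted_list_of_set C ! i \<in> C"
    using \<open>finite C\<close> by simp
  then show ?thesis
    using assms(1) unfolding interval_codes_def by auto
qed

lemma mem_interval_union_iff_odd_card:
  assumes "finite C" and "card C = 2*k"
  shows "p \<in> interval_union k C \<longleftrightarrow> odd (card {c\<in>C. c \<le> p})"
proof -
  define r where "r = card {c\<in>C. c \<le> p}"
  have "r \<le> 2*k"
    unfolding r_def using assms card_mono[OF assms(1), of "{c\<in>C. c \<le> p}"] by auto
  have nth_le: "sorted_list_of_set C ! i \<le> p \<longleftrightarrow> i < r" if "i < 2*k" for i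
    using nth_sorted_list_of_set_le_iff[OF assms(1)] assms(2) that unfolding r_def by simp
  have bounds_iff: "(sorted_list_of_set C ! (2*j) \<le> p \<and> p < sorted_list_of_set C ! (2*j+1))
      \<longleftrightarrow> (2*j < r \<and> \<not> 2*j+1 < r)" if "j < k" for j
  proof -
    have "2*j < 2*k" "2*j+1 < 2*k"
      using that by auto
    then show ?thesis
      using nth_le[of "2*j"] nth_le[of "2*j+1"] by auto
  qed
  have "p \<in> interval_union k C \<longleftrightarrow> (\<exists>j<k. 2*j < r \<and> \<not> 2*j+1 < r)"
  proof
    assume "p \<in> interval_union k C"
    then obtain j where "j < k" "sorted_list_of_set C ! (2*j) \<le> p \<and> p < sorted_list_of_set C ! (2*j+1)"
      unfolding interval_union_def by blast
    then show "\<exists>j<k. 2*j < r \<and> \<not> 2*j+1 < r"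
      using bounds_iff[OF \<open>j < k\<close>] by (intro exI[of _ j]) simp
  next
    assume "\<exists>j<k. 2*j < r \<and> \<not> 2*j+1 < r"
    then obtain j where "j < k" "2*j < r \<and> \<not> 2*j+1 < r"
      by blast
    then show "p \<in> interval_union k C"
      using bounds_iff[OF \<open>j < k\<close>] unfolding interval_union_def by blast
  qed
  also have "\<dots> \<longleftrightarrow> odd r"
  proof
    assume "\<exists>j<k. 2*j < r \<and> \<not> 2*j+1 < r"
    then obtain j where "2*j < r" "\<not> 2*j+1 < r" by blast
    then have "r = 2*j+1" by simp
    then show "odd r" by simp
  next
    assume "odd r"
    then obtain j where "r = 2*j+1" by (blast elim: oddE)
    then show "\<exists>j<k. 2*j < r \<and> \<not> 2*j+1 < r"
      using \<open>r \<le> 2*k\<close> by (intro exI[of _ j]) auto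
  qed
  finally show ?thesis unfolding r_def .
qed

lemma mem_iff_odd_card_changes:
  fixes C :: "nat set"
  assumes "finite C"
  shows "p \<in> C \<longleftrightarrow> odd (card {c\<in>C. c \<le> p}) \<noteq> (0 < p \<and> odd (card {c\<in>C. c \<le> p - 1}))"
proof -
  have below: "{c\<in>C. c < p} = (if 0 < p then {c\<in>C. c \<le> p - 1} else {})"
    by (cases p) auto
  have "card {c\<in>C. c \<le> p} = card {c\<in>C. c < p} + (if p \<in> C then 1 else 0)"
  proof (cases "p \<in> C")
    case True
    then have "{c\<in>C. c \<le> p} = insert p {c\<in>C. c < p}" by auto
    then show ?thesis using True assms by simp
  next
    case False
    then have "{c\<in>C. c \<le> p} = {c\<in>C. c < p}" by (auto simp: le_less)
    then show ?thesis using False by simp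
  qed
  moreover have "odd (card {c\<in>C. c < p}) \<longleftrightarrow> 0 < p \<and> odd (card {c\<in>C. c \<le> p - 1})"
    unfolding below by simp
  ultimately show ?thesis
    by (cases "p \<in> C") simp_all
qed

lemma interval_union_inj:
  assumes "finite C" "finite C'" "card C = 2*k" "card C' = 2*k'"
    and "interval_union k C = interval_union k' C'"
  shows "C = C'"
proof -
  have odd_eq: "odd (card {c\<in>C. c \<le> p}) \<longleftrightarrow> odd (card {c\<in>C'. c \<le> p})" for p
    using mem_interval_union_iff_odd_card[OF assms(1,3), of p, symmetric]
      mem_interval_union_iff_odd_card[OF assms(2,4), of p, symmetric] assms(5) by simp
  have "p \<in> C \<longleftrightarrow> p \<in> C'" for p
    by (simp only: mem_iff_odd_card_changes[OF assms(1), of p] mem_iff_odd_card_changes[OF assms(2), of p] odd_eq)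
  then show ?thesis by blast
qed

lemma interval_union_subset:
  assumes "C \<in> interval_codes M k"
  shows "interval_union k C \<subseteq> {..<M}"
proof
  fix p assume "p \<in> interval_union k C"
  then obtain j where "j < k" "p < sorted_list_of_set C ! (2*j+1)"
    unfolding interval_union_def by blast
  then show "p \<in> {..<M}"
    using interval_codes_nth_bound[OF assms, of "2*j+1"] by simp
qed

lemma interval_codes_eqI:
  assumes "C \<in> interval_codes M k" and "C' \<in> interval_codes M k"
    and "\<And>p. p < M \<Longrightarrow> p \<in> interval_union k C \<longleftrightarrow> p \<in> interval_union k C'"
  shows "C = C'"
proof (rule interval_union_inj)
  show "finite C" "finite C'"
    using interval_codes_finite assms(1,2) by blast+
  show "card C = 2*k" "card C' = 2*k"
    using assms(1,2) unfolding interval_codes_def by simp_all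
  show "interval_union k C = interval_union k C'"
    using assms(3) interval_union_subset[OF assms(1)] interval_union_subset[OF assms(2)] by blast
qed

definition shift0 :: "real \<Rightarrow> nat \<Rightarrow> real" where
  "shift0 a j = (if j = 0 then a else 0)"

definition slab :: "nat \<Rightarrow> real \<Rightarrow> real \<Rightarrow> nat \<Rightarrow> nat \<Rightarrow> (nat \<Rightarrow> real) set" where
  "slab d W a i p =
     box_set d (\<lambda>j. shift0 a j + (if j = i then real p else 0))
               (\<lambda>j. shift0 a j + (if j = i then real p else W))"

text \<open>The closed integer interval [c, c' - 1] stands for the half-open interval [c, c').\<close>

definition code_box :: "nat \<Rightarrow> real \<Rightarrow> (nat \<Rightarrow> nat set) \<Rightarrow> nat \<Rightarrow> (nat \<Rightarrow> real) set" where
  "code_box d a C k =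
     box_set d (\<lambda>j. shift0 a j + real (sorted_list_of_set (C j) ! (2*k)))
               (\<lambda>j. shift0 a j + real (sorted_list_of_set (C j) ! (2*k+1)) - 1)"

definition layer :: "real \<Rightarrow> real \<Rightarrow> (nat \<Rightarrow> real) set" where
  "layer a W = {x. a \<le> x 0 \<and> x 0 \<le> a + W}"

lemma layers_disjoint: "0 < W \<Longrightarrow> layer 0 W \<inter> layer (2*W) W = {}"
  unfolding layer_def by auto

lemma is_box_slab: "0 \<le> W \<Longrightarrow> is_box d (slab d W a i p)"
  unfolding slab_def by (rule is_box_box_set) auto

lemma slab_subset_layer:
  assumes "0 < d" and "0 \<le> W" and "real p \<le> W"
  shows "slab d W a i p \<subseteq> layer a W"
  using box_set_coord0_bounds[OF assms(1)] assms(2,3)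
  unfolding slab_def layer_def shift0_def by (fastforce split: if_splits)

lemma interval_codes_interval_bounds:
  assumes "C \<in> interval_codes M k" and "kk < k"
  shows "real (sorted_list_of_set C ! (2*kk)) + 1 \<le> real (sorted_list_of_set C ! (2*kk+1))"
    and "real (sorted_list_of_set C ! (2*kk+1)) \<le> real M"
  using interval_codes_nth_less[OF assms(1), of "2*kk" "2*kk+1"]
    interval_codes_nth_bound[OF assms(1), of "2*kk+1"] assms(2) by simp_all

lemma is_box_code_box:
  assumes "\<forall>j<d. C j \<in> interval_codes M k" and "kk < k"
  shows "is_box d (code_box d a C kk)"
  unfolding code_box_def using interval_codes_interval_bounds(1)[OF _ assms(2)] assms(1)
  by (intro is_box_box_set) force

lemma code_box_subset_layer:
  assumes "0 < d" and "\<forall>j<d. C j \<in> interval_codes M k" and "kk < k" and "real M \<le> W"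
  shows "code_box d a C kk \<subseteq> layer a W"
  using box_set_coord0_bounds[OF assms(1)] interval_codes_interval_bounds[OF _ assms(3), of "C 0"]
    assms(1,2,4)
  unfolding code_box_def layer_def shift0_def by fastforce

lemma code_boxes_disjoint:
  assumes "0 < d" and "\<forall>j<d. C j \<in> interval_codes M k" and "kk < k" and "kk' < k" and "kk \<noteq> kk'"
  shows "code_box d a C kk \<inter> code_box d a C kk' = {}"
proof -
  have "code_box d a C k1 \<inter> code_box d a C k2 = {}" if "k1 < k2" "k2 < k" for k1 k2
  proof -
    have "sorted_list_of_set (C 0) ! (2*k1+1) < sorted_list_of_set (C 0) ! (2*k2)"
      using interval_codes_nth_less[of "C 0" M k] assms(1,2) that by simp
    then show ?thesis
      unfolding code_box_def by (intro box_set_disjoint_coord0[OF assms(1)]) simp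
  qed
  then show ?thesis
    using assms(3-5) by (metis Int_commute linorder_neqE_nat)
qed

lemma pairwise_disjnt_code_boxes:
  assumes "0 < d" and "\<forall>j<d. C j \<in> interval_codes M k"
  shows "pairwise disjnt (code_box d a C ` {..<k})"
  by (rule pairwise_imageI) (use code_boxes_disjoint[where C = C, OF assms] in \<open>auto simp: disjnt_def\<close>)

lemma code_box_Int_slab_iff:
  assumes "\<forall>j<d. C j \<in> interval_codes M k" and "kk < k" and "real M \<le> W" and "i < d"
  shows "code_box d a C kk \<inter> slab d W a i p \<noteq> {} \<longleftrightarrow>
    sorted_list_of_set (C i) ! (2*kk) \<le> p \<and> p < sorted_list_of_set (C i) ! (2*kk+1)"
proof -
  let ?lo = "\<lambda>j. real (sorted_list_of_set (C j) ! (2*kk))"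
  let ?hi = "\<lambda>j. real (sorted_list_of_set (C j) ! (2*kk+1))"
  have bounds: "?lo j + 1 \<le> ?hi j" "?hi j \<le> W" if "j < d" for j
    using interval_codes_interval_bounds[OF _ assms(2), of "C j" M] assms(1,3) that by auto
  have "0 \<le> W"
    using assms(3) of_nat_0_le_iff order_trans by blast
  let ?box = "\<lambda>j. shift0 a j + ?lo j \<le> shift0 a j + (if j = i then real p else W)
      \<and> shift0 a j + (if j = i then real p else 0) \<le> shift0 a j + ?hi j - 1"
  have "code_box d a C kk \<inter> slab d W a i p \<noteq> {} \<longleftrightarrow> (\<forall>j<d. ?box j)"
    unfolding code_box_def slab_def
    by (rule box_set_Int_nonempty_iff) (use bounds \<open>0 \<le> W\<close> in fastforce)+
  also have "\<dots> \<longleftrightarrow> ?lo i \<le> real p \<and> real p \<le> ?hi i - 1"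
  proof
    assume "\<forall>j<d. ?box j"
    then show "?lo i \<le> real p \<and> real p \<le> ?hi i - 1"
      using assms(4) by auto
  next
    assume at_i: "?lo i \<le> real p \<and> real p \<le> ?hi i - 1"
    show "\<forall>j<d. ?box j"
    proof (intro allI impI)
      fix j assume "j < d"
      then have "?lo j + 1 \<le> ?hi j" "?hi j \<le> W"
        by (rule bounds)+
      then show "?box j"
        using at_i by (cases "j = i") auto
    qed
  qed
  also have "\<dots> \<longleftrightarrow> sorted_list_of_set (C i) ! (2*kk) \<le> p \<and> p < sorted_list_of_set (C i) ! (2*kk+1)"
    by linarith
  finally show ?thesis .
qed

lemma code_boxes_meet_slab_iff:
  assumes "\<forall>j<d. C j \<in> interval_codes M k" and "real M \<le> W" and "i < d"
  shows "(\<exists>kk<k. code_box d a C kk \<inter> slab d W a i p \<noteq> {}) \<longleftrightarrow> p \<in> interval_union k (C i)"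
  unfolding interval_union_def mem_Collect_eq
  by (intro ex_cong1 conj_cong refl code_box_Int_slab_iff[OF assms(1) _ assms(2,3)])

lemma card_iso_class_le_fact:
  assumes "E \<subseteq> {..<n} \<times> {..<n}"
  shows "card {E' \<in> graphs_on n. graph_iso n E E'} \<le> fact n"
proof -
  let ?P = "{f. f permutes {..<n}}"
  have "{E' \<in> graphs_on n. graph_iso n E E'} \<subseteq> (\<lambda>f. map_prod f f ` E) ` ?P"
  proof
    fix E' assume "E' \<in> {E' \<in> graphs_on n. graph_iso n E E'}"
    then have E': "E' \<subseteq> {..<n} \<times> {..<n}" and "graph_iso n E E'"
      unfolding graphs_on_def by auto
    then obtain f where bij: "bij_betw f {..<n} {..<n}"
      and iso: "\<forall>u<n. \<forall>v<n. (u, v) \<in> E \<longleftrightarrow> (f u, f v) \<in> E'"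
      unfolding graph_iso_def by blast
    define g where "g x = (if x < n then f x else x)" for x
    have "bij_betw g {..<n} {..<n}"
      using bij by (rule bij_betw_cong[THEN iffD1, rotated]) (simp add: g_def)
    then have "g permutes {..<n}"
      by (rule bij_imp_permutes) (simp add: g_def)
    moreover have "E' = map_prod g g ` E"
    proof
      show "E' \<subseteq> map_prod g g ` E"
      proof
        fix z assume "z \<in> E'"
        then obtain x y where z: "z = (x, y)" "x < n" "y < n"
          using E' by blast
        then obtain u v where "u < n" "v < n" "f u = x" "f v = y"
          using bij unfolding bij_betw_def by (metis imageE lessThan_iff)
        then show "z \<in> map_prod g g ` E"
          using iso \<open>z \<in> E'\<close> z by (force simp: g_def)
      qed
      show "map_prod g g ` E \<subseteq> E'"
        using assms iso by (force simp: g_def)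
    qed
    ultimately show "E' \<in> (\<lambda>f. map_prod f f ` E) ` ?P"
      by blast
  qed
  then have "card {E' \<in> graphs_on n. graph_iso n E E'} \<le> card ((\<lambda>f. map_prod f f ` E) ` ?P)"
    by (rule card_mono[rotated]) (simp add: finite_permutations)
  also have "\<dots> \<le> card ?P"
    by (rule card_image_le) (simp add: finite_permutations)
  also have "\<dots> = fact n"
    by (simp add: card_permutations)
  finally show ?thesis .
qed

lemma card_rep_graphs_le: "card (rep_graphs t d n) \<le> fact n * num_G t d n"
proof -
  let ?R = "rep_graphs t d n"
  let ?iso = "{(E, E'). E \<in> ?R \<and> E' \<in> ?R \<and> graph_iso n E E'}"
  have refl_iso: "E \<in> ?iso `` {E}" if "E \<in> ?R" for E
  proof -
    have "graph_iso n E E"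
      unfolding graph_iso_def by (rule exI[of _ id]) auto
    then show ?thesis
      using that by simp
  qed
  have R_eq: "?R = \<Union> (?R // ?iso)"
  proof
    show "?R \<subseteq> \<Union> (?R // ?iso)"
      using refl_iso unfolding quotient_def by blast
    show "\<Union> (?R // ?iso) \<subseteq> ?R"
      unfolding quotient_def by auto
  qed
  have "card ?R \<le> sum card (?R // ?iso)"
    by (subst R_eq) (rule card_Union_le_sum_card)
  also have "\<dots> \<le> of_nat (card (?R // ?iso)) * fact n"
  proof (rule sum_bounded_above)
    fix Q assume "Q \<in> ?R // ?iso"
    then obtain E where E: "E \<in> ?R" and Q: "Q = ?iso `` {E}"
      unfolding quotient_def by blast
    have "Q \<subseteq> {E' \<in> graphs_on n. graph_iso n E E'}"
      unfolding Q rep_graphs_def by auto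
    moreover have "finite (graphs_on n)"
      by (rule finite_subset[of _ "Pow ({..<n} \<times> {..<n})"]) (auto simp: graphs_on_def)
    ultimately have "card Q \<le> card {E' \<in> graphs_on n. graph_iso n E E'}"
      by (intro card_mono) auto
    also have "\<dots> \<le> fact n"
      using E by (intro card_iso_class_le_fact) (auto simp: rep_graphs_def graphs_on_def)
    finally show "card Q \<le> fact n" .
  qed
  finally show ?thesis
    unfolding num_G_def by (simp add: mult.commute)
qed

definition intersection_graph :: "nat \<Rightarrow> (nat \<Rightarrow> (nat \<Rightarrow> real) set set) \<Rightarrow> (nat \<times> nat) set" where
  "intersection_graph n B = {(u, v). u < n \<and> v < n \<and> u \<noteq> v \<and> (\<exists>b\<in>B u. \<exists>b'\<in>B v. b \<inter> b' \<noteq> {})}"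

lemma mem_intersection_graph_iff:
  "u < n \<Longrightarrow> v < n \<Longrightarrow> u \<noteq> v \<Longrightarrow>
    (u, v) \<in> intersection_graph n B \<longleftrightarrow> (\<exists>b\<in>B u. \<exists>b'\<in>B v. b \<inter> b' \<noteq> {})"
  unfolding intersection_graph_def by simp

lemma intersection_graph_in_rep_graphs:
  assumes "\<And>v. v < n \<Longrightarrow> finite (B v) \<and> card (B v) \<le> t \<and> (\<forall>b\<in>B v. is_box d b) \<and> pairwise disjnt (B v)"
  shows "intersection_graph n B \<in> rep_graphs t d n"
proof -
  have "intersection_graph n B \<in> graphs_on n"
    unfolding graphs_on_def intersection_graph_def sym_def irrefl_def by (auto simp: Int_commute)
  moreover have "has_rep t d n (intersection_graph n B)"
    unfolding has_rep_def intersection_graph_def using assms by (intro exI[of _ B]) auto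
  ultimately show ?thesis
    unfolding rep_graphs_def by simp
qed

lemma mult_add_less_mult:
  fixes i p d m :: nat
  assumes "i < d" and "p < m"
  shows "i * m + p < d * m"
proof -
  have "i * m + p < Suc i * m"
    using assms(2) by simp
  also have "\<dots> \<le> d * m"
    using assms(1) by (intro mult_right_mono) auto
  finally show ?thesis .
qed

locale box_construction =
  fixes t d m m' n :: nat
  assumes t_pos: "1 \<le> t" and d_pos: "0 < d" and m_pos: "0 < m" and fits: "d*m' + d*m \<le> n"
begin

definition width :: real where
  "width = real (m + m' + 1)"

lemma width: "0 < width" "real m \<le> width" "real m' \<le> width"
  unfolding width_def by simp_all

lemma mod_le_width: "real (x mod m) \<le> width"
proof -
  have "real (x mod m) < real m"
    using m_pos by simp
  then show ?thesis
    using width(2) by linarith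
qed

definition codes :: "(nat \<Rightarrow> nat \<Rightarrow> nat set) set" where
  "codes = (\<Pi>\<^sub>E v\<in>{d*m'..<n}. \<Pi>\<^sub>E j\<in>{..<d}.
              if v < d*m' + d*m then interval_codes m' (t-1) else interval_codes m t)"

text \<open>Vertex i*m' + p is the upper probe at position p in direction i, vertex d*m' + i*m + p the
  lower probe at p in direction i; the remaining vertices d*m' + d*m, ..., n - 1 are coded.\<close>

definition vertex_boxes :: "(nat \<Rightarrow> nat \<Rightarrow> nat set) \<Rightarrow> nat \<Rightarrow> (nat \<Rightarrow> real) set set" where
  "vertex_boxes \<phi> v =
     (if v < d*m' then {slab d width (2*width) (v div m') (v mod m')}
      else if v < d*m' + d*m then
        insert (slab d width 0 ((v - d*m') div m) ((v - d*m') mod m))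
          (code_box d (2*width) (\<phi> v) ` {..<t-1})
      else code_box d 0 (\<phi> v) ` {..<t})"

lemma codes_mem:
  assumes "\<phi> \<in> codes" and "d*m' \<le> v" and "v < n" and "j < d"
  shows "\<phi> v j \<in> (if v < d*m' + d*m then interval_codes m' (t-1) else interval_codes m t)"
proof -
  have "\<phi> v \<in> (\<Pi>\<^sub>E j\<in>{..<d}. if v < d*m' + d*m then interval_codes m' (t-1) else interval_codes m t)"
    using PiE_mem[OF assms(1)[unfolded codes_def], of v] assms(2,3) by simp
  then show ?thesis
    using PiE_mem assms(4) by fastforce
qed

lemma codes_lower_probe:
  assumes "\<phi> \<in> codes" and "d*m' \<le> v" and "v < d*m' + d*m" and "j < d"
  shows "\<phi> v j \<in> interval_codes m' (t-1)"
  using codes_mem[OF assms(1,2) _ assms(4)] assms(3) fits by simp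

lemma codes_coded:
  assumes "\<phi> \<in> codes" and "d*m' + d*m \<le> v" and "v < n" and "j < d"
  shows "\<phi> v j \<in> interval_codes m t"
  using codes_mem[OF assms(1) _ assms(3,4)] assms(2) by simp

lemma vertex_boxes_valid:
  assumes "\<phi> \<in> codes" and "v < n"
  shows "finite (vertex_boxes \<phi> v) \<and> card (vertex_boxes \<phi> v) \<le> t
    \<and> (\<forall>b\<in>vertex_boxes \<phi> v. is_box d b) \<and> pairwise disjnt (vertex_boxes \<phi> v)"
proof -
  have code_boxes_valid: "card (code_box d a (\<phi> v) ` {..<k}) \<le> k
      \<and> (\<forall>b\<in>code_box d a (\<phi> v) ` {..<k}. is_box d b) \<and> pairwise disjnt (code_box d a (\<phi> v) ` {..<k})"
    if "\<forall>j<d. \<phi> v j \<in> interval_codes M k" for a M k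
    using card_image_le[of "{..<k}"] is_box_code_box[OF that] pairwise_disjnt_code_boxes[OF d_pos] that d_pos
    by auto
  consider (upper) "v < d*m'" | (lower) "d*m' \<le> v" "v < d*m' + d*m" | (coded) "d*m' + d*m \<le> v"
    by linarith
  then show ?thesis
  proof cases
    case upper
    then show ?thesis
      using t_pos width(1) is_box_slab unfolding vertex_boxes_def by auto
  next
    case lower
    let ?s = "slab d width 0 ((v - d*m') div m) ((v - d*m') mod m)"
    let ?F = "code_box d (2*width) (\<phi> v) ` {..<t-1}"
    have codes: "\<forall>j<d. \<phi> v j \<in> interval_codes m' (t-1)"
      using codes_lower_probe[OF assms(1) lower] by blast
    have "?s \<subseteq> layer 0 width"
      using width(1) mod_le_width by (intro slab_subset_layer[OF d_pos]) auto
    moreover have "b \<subseteq> layer (2*width) width" if "b \<in> ?F" for b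
      using that code_box_subset_layer[OF d_pos codes _ width(3)] by auto
    ultimately have "disjnt ?s b" "disjnt b ?s" if "b \<in> ?F" for b
      using that layers_disjoint[OF width(1)] unfolding disjnt_def by blast+
    then have "pairwise disjnt (insert ?s ?F)"
      using code_boxes_valid[OF codes] by (auto simp: pairwise_insert)
    moreover have "card (insert ?s ?F) \<le> t"
      using code_boxes_valid[OF codes] t_pos card_insert_le_m1[of t ?F] by simp
    ultimately show ?thesis
      using lower code_boxes_valid[OF codes] is_box_slab[OF less_imp_le[OF width(1)]]
      unfolding vertex_boxes_def by auto
  next
    case coded
    then show ?thesis
      using code_boxes_valid[of M t for M] codes_coded[OF assms(1) coded assms(2)]
      unfolding vertex_boxes_def by auto
  qed
qed

definition code_graph :: "(nat \<Rightarrow> nat \<Rightarrow> nat set) \<Rightarrow> (nat \<times> nat) set" where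
  "code_graph \<phi> = intersection_graph n (vertex_boxes \<phi>)"

lemma code_graph_in_rep_graphs: "\<phi> \<in> codes \<Longrightarrow> code_graph \<phi> \<in> rep_graphs t d n"
  unfolding code_graph_def by (rule intersection_graph_in_rep_graphs) (rule vertex_boxes_valid)

lemma coded_adj_lower_probe_iff:
  assumes "\<phi> \<in> codes" and "d*m' + d*m \<le> u" and "u < n" and "i < d" and "p < m"
  shows "(u, d*m' + i*m + p) \<in> code_graph \<phi> \<longleftrightarrow> p \<in> interval_union t (\<phi> u i)"
proof -
  define w where "w = d*m' + i*m + p"
  have w: "d*m' \<le> w" "w < d*m' + d*m" "(w - d*m') div m = i" "(w - d*m') mod m = p"
    using mult_add_less_mult[OF assms(4,5)] assms(5) unfolding w_def by auto
  have codes_u: "\<forall>j<d. \<phi> u j \<in> interval_codes m t"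
    using codes_coded[OF assms(1-3)] by blast
  have codes_w: "\<forall>j<d. \<phi> w j \<in> interval_codes m' (t-1)"
    using codes_lower_probe[OF assms(1) w(1,2)] by blast
  have boxes_u: "vertex_boxes \<phi> u = code_box d 0 (\<phi> u) ` {..<t}"
    using assms(2) unfolding vertex_boxes_def by simp
  have boxes_w: "vertex_boxes \<phi> w = insert (slab d width 0 i p) (code_box d (2*width) (\<phi> w) ` {..<t-1})"
    using w unfolding vertex_boxes_def by simp
  have "code_box d 0 (\<phi> u) k \<inter> code_box d (2*width) (\<phi> w) k' = {}" if "k < t" "k' < t-1" for k k'
    using code_box_subset_layer[OF d_pos codes_u that(1) width(2), of 0]
      code_box_subset_layer[OF d_pos codes_w that(2) width(3), of "2*width"]
      layers_disjoint[OF width(1)] by blast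
  moreover have "u \<noteq> w" "w < n"
    using w(2) assms(2,3) by auto
  ultimately have "(u, w) \<in> code_graph \<phi> \<longleftrightarrow> (\<exists>k<t. code_box d 0 (\<phi> u) k \<inter> slab d width 0 i p \<noteq> {})"
    unfolding code_graph_def using assms(3) by (auto simp: mem_intersection_graph_iff boxes_u boxes_w)
  also have "\<dots> \<longleftrightarrow> p \<in> interval_union t (\<phi> u i)"
    by (rule code_boxes_meet_slab_iff[OF codes_u width(2) assms(4)])
  finally show ?thesis
    unfolding w_def .
qed

lemma lower_probe_adj_upper_probe_iff:
  assumes "\<phi> \<in> codes" and "d*m' \<le> u" and "u < d*m' + d*m" and "i < d" and "p < m'"
  shows "(u, i*m' + p) \<in> code_graph \<phi> \<longleftrightarrow> p \<in> interval_union (t-1) (\<phi> u i)"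
proof -
  define w where "w = i*m' + p"
  have w: "w < d*m'" "w div m' = i" "w mod m' = p"
    using mult_add_less_mult[OF assms(4,5)] assms(5) unfolding w_def by auto
  have codes_u: "\<forall>j<d. \<phi> u j \<in> interval_codes m' (t-1)"
    using codes_lower_probe[OF assms(1-3)] by blast
  let ?s = "slab d width 0 ((u - d*m') div m) ((u - d*m') mod m)"
  have boxes_u: "vertex_boxes \<phi> u = insert ?s (code_box d (2*width) (\<phi> u) ` {..<t-1})"
    using assms(2,3) unfolding vertex_boxes_def by simp
  have boxes_w: "vertex_boxes \<phi> w = {slab d width (2*width) i p}"
    using w unfolding vertex_boxes_def by simp
  have "real p \<le> width"
    using assms(5) width(3) by linarith
  then have "?s \<inter> slab d width (2*width) i p = {}"
    using slab_subset_layer[OF d_pos _ mod_le_width] slab_subset_layer[OF d_pos]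
      layers_disjoint[OF width(1)] width(1) by (meson disjoint_iff less_imp_le subsetD)
  moreover have "u \<noteq> w" "u < n" "w < n"
    using w(1) assms(2,3) fits by auto
  ultimately have "(u, w) \<in> code_graph \<phi> \<longleftrightarrow>
      (\<exists>k<t-1. code_box d (2*width) (\<phi> u) k \<inter> slab d width (2*width) i p \<noteq> {})"
    unfolding code_graph_def by (auto simp: mem_intersection_graph_iff boxes_u boxes_w)
  also have "\<dots> \<longleftrightarrow> p \<in> interval_union (t-1) (\<phi> u i)"
    by (rule code_boxes_meet_slab_iff[OF codes_u width(3) assms(4)])
  finally show ?thesis
    unfolding w_def .
qed

lemma inj_on_code_graph: "inj_on code_graph codes"
proof (rule inj_onI)
  fix \<phi> \<psi> assume \<phi>: "\<phi> \<in> codes" and \<psi>: "\<psi> \<in> codes" and eq: "code_graph \<phi> = code_graph \<psi>"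
  have same: "\<phi> v j = \<psi> v j" if v: "d*m' \<le> v" "v < n" and j: "j < d" for v j
  proof (cases "v < d*m' + d*m")
    case True
    show ?thesis
      by (rule interval_codes_eqI[OF codes_lower_probe[OF \<phi> v(1) True j] codes_lower_probe[OF \<psi> v(1) True j]])
        (use lower_probe_adj_upper_probe_iff[OF \<phi> v(1) True j] lower_probe_adj_upper_probe_iff[OF \<psi> v(1) True j] eq
          in simp)
  next
    case False
    then have v': "d*m' + d*m \<le> v" by simp
    show ?thesis
      by (rule interval_codes_eqI[OF codes_coded[OF \<phi> v' v(2) j] codes_coded[OF \<psi> v' v(2) j]])
        (use coded_adj_lower_probe_iff[OF \<phi> v' v(2) j] coded_adj_lower_probe_iff[OF \<psi> v' v(2) j] eq in simp)
  qed
  show "\<phi> = \<psi>"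
  proof (rule PiE_ext[OF \<phi>[unfolded codes_def] \<psi>[unfolded codes_def]])
    fix v assume v: "v \<in> {d*m'..<n}"
    show "\<phi> v = \<psi> v"
      by (rule PiE_ext[OF PiE_mem[OF \<phi>[unfolded codes_def] v] PiE_mem[OF \<psi>[unfolded codes_def] v]])
        (use same v in auto)
  qed
qed

lemma card_codes:
  "card codes = (m' choose (2*(t-1))) ^ (d*(d*m)) * (m choose (2*t)) ^ (d*(n - (d*m' + d*m)))"
proof -
  let ?c = "\<lambda>v. card (\<Pi>\<^sub>E j\<in>{..<d}. if v < d*m' + d*m then interval_codes m' (t-1) else interval_codes m t)"
  have "{d*m'..<n} = {d*m'..<d*m' + d*m} \<union> {d*m' + d*m..<n}"
    using fits by auto
  then have "card codes = (\<Prod>v\<in>{d*m'..<d*m' + d*m}. ?c v) * (\<Prod>v\<in>{d*m' + d*m..<n}. ?c v)"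
    unfolding codes_def by (simp add: card_PiE prod.union_disjoint)
  also have "\<dots> = (\<Prod>v\<in>{d*m'..<d*m' + d*m}. (m' choose (2*(t-1))) ^ d) * (\<Prod>v\<in>{d*m' + d*m..<n}. (m choose (2*t)) ^ d)"
    by (intro arg_cong2[where f = "(*)"] prod.cong) (auto simp: card_PiE card_interval_codes)
  finally show ?thesis
    by (simp add: power_mult[symmetric] mult.commute)
qed

lemma card_codes_le_card_rep_graphs: "card codes \<le> card (rep_graphs t d n)"
proof -
  have "finite (rep_graphs t d n)"
    by (rule finite_subset[of _ "Pow ({..<n} \<times> {..<n})"]) (auto simp: rep_graphs_def graphs_on_def)
  moreover have "code_graph ` codes \<subseteq> rep_graphs t d n"
    using code_graph_in_rep_graphs by blast
  ultimately show ?thesis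
    using card_image[OF inj_on_code_graph] card_mono by metis
qed

lemma log2_num_G_ge:
  assumes "2*t \<le> m" and "2*(t-1) \<le> m'"
  shows "real (d*(d*m)) * log 2 (m' choose (2*(t-1))) + real (d*(n - (d*m' + d*m))) * log 2 (m choose (2*t))
    - log 2 (fact n) \<le> log 2 (num_G t d n)"
proof -
  have choose_pos: "0 < m choose (2*t)" "0 < m' choose (2*(t-1))"
    using assms by simp_all
  then have codes_pos: "0 < card codes"
    unfolding card_codes by simp
  have "card codes \<le> fact n * num_G t d n"
    using card_codes_le_card_rep_graphs card_rep_graphs_le by (rule order_trans)
  then have le: "real (card codes) \<le> fact n * real (num_G t d n)"
    by (metis of_nat_fact of_nat_le_iff of_nat_mult)
  with codes_pos have "0 < num_G t d n"
    by (cases "num_G t d n = 0") auto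
  have "log 2 (card codes) - log 2 (fact n) = log 2 (real (card codes) / fact n)"
    using codes_pos by (simp add: log_divide)
  also have "\<dots> \<le> log 2 (num_G t d n)"
    using le codes_pos \<open>0 < num_G t d n\<close> by (subst log_le_cancel_iff) (auto simp: field_simps)
  finally show ?thesis
    using choose_pos unfolding card_codes by (simp add: log_mult log_nat_power)
qed

end

lemma ln_fact_le:
  assumes "1 \<le> k"
  shows "ln (fact k) \<le> real k * ln (real k) - real k + ln (real k) + 1"
  using assms
proof (induction k rule: dec_induct)
  case base
  then show ?case by simp
next
  case (step k)
  have k: "1 \<le> real k"
    using step(1) by simp
  have "1 - real k / (real k + 1) \<le> ln ((real k + 1) / real k)"
    using ln_le_minus_one[of "real k / (real k + 1)"] k by (simp add: ln_div)
  then have gain: "1 \<le> (real k + 1) * (ln (real k + 1) - ln (real k))"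
    using k by (simp add: ln_div field_simps)
  have "ln (fact (Suc k)) = ln (real k + 1) + ln (fact k)"
    by (simp add: ln_mult add.commute)
  also have "\<dots> \<le> (real k + 1) * ln (real k + 1) - (real k + 1) + ln (real k + 1) + 1"
    using step.IH gain by (simp add: algebra_simps)
  finally show ?case
    by (simp add: add.commute)
qed

lemma log2_fact_le:
  assumes "1 \<le> k"
  shows "log 2 (fact k) \<le> real k * log 2 (real k) - real k / ln 2 + log 2 (real k) + 1 / ln 2"
proof -
  have "log 2 (fact k) = ln (fact k) / ln 2"
    by (simp add: log_def)
  also have "\<dots> \<le> (real k * ln (real k) - real k + ln (real k) + 1) / ln 2"
    by (rule divide_right_mono[OF ln_fact_le[OF assms]]) simp
  also have "\<dots> = real k * log 2 (real k) - real k / ln 2 + log 2 (real k) + 1 / ln 2"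
    by (simp add: log_def field_simps)
  finally show ?thesis .
qed

lemma pow_le_choose_mult_fact:
  assumes "k \<le> M"
  shows "(M - k + 1) ^ k \<le> (M choose k) * fact k"
proof -
  have "(M choose k) * fact k * fact (M - k) = fact M"
    using binomial_fact_lemma[OF assms] by (simp add: ac_simps)
  also have "\<dots> = (\<Prod>i\<in>{M - k..<M}. Suc i) * fact (M - k)"
    using fact_split[OF assms, where 'a = nat] by simp
  finally have "(M choose k) * fact k = (\<Prod>i\<in>{M - k..<M}. Suc i)"
    by simp
  moreover have "(M - k + 1) ^ k = (\<Prod>i\<in>{M - k..<M}. M - k + 1)"
    using assms by simp
  moreover have "(\<Prod>i\<in>{M - k..<M}. M - k + 1) \<le> (\<Prod>i\<in>{M - k..<M}. Suc i)"
    by (rule prod_mono) auto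
  ultimately show ?thesis
    by simp
qed

lemma one_plus_log2_le:
  assumes "1 \<le> t"
  shows "1 + log 2 (real t) \<le> real t"
proof -
  have "2 * t \<le> 2 ^ t"
    using assms by (induction t rule: dec_induct) auto
  then have "2 * real t \<le> 2 powr real t"
    by (metis of_nat_le_iff of_nat_mult of_nat_numeral of_nat_power powr_realpow zero_less_numeral)
  then have "log 2 (2 * real t) \<le> real t"
    using assms by (subst log_le_iff) auto
  then show ?thesis
    using assms by (simp add: log_mult)
qed

lemma inv_ln2_bounds: "36/25 \<le> 1 / ln (2::real)" "1 / ln (2::real) \<le> 3/2"
  using ln2_ge_two_thirds ln2_le_25_over_36 by (simp_all add: field_simps)

lemma log2_31_32_ge: "-(1/10) \<le> log 2 (31/32::real)"
proof -
  have "-1/31 \<le> ln (31/32::real)"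
    using ln_le_minus_one[of "32/31::real"] by (simp add: ln_div)
  then have "(-1/31) / ln 2 \<le> log 2 (31/32::real)"
    unfolding log_def by (rule divide_right_mono) simp
  moreover have "(-1/31) * (3/2) \<le> (-1/31) / ln (2::real)"
    using mult_left_mono_neg[OF inv_ln2_bounds(2), of "-1/31"] by simp
  ultimately show ?thesis
    by simp
qed

lemma log2_dimension_bound:
  assumes "1 \<le> d"
  shows "(7/2) * (real d - 1) \<le> 2 * real d * log 2 (real d)"
proof -
  consider "d = 1" | "d = 2" | "d = 3" | "4 \<le> d"
    using assms by linarith
  then show ?thesis
  proof cases
    case 3
    have "log 2 (8::real) \<le> log 2 9"
      by simp
    moreover have "log 2 (8::real) = 3"
      using log_nat_power[of "2::real" 2 3] by simp
    moreover have "log 2 (9::real) = 2 * log 2 3"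
      using log_nat_power[of 3 "2::real" 2] by simp
    ultimately have "3/2 \<le> log 2 (3::real)"
      by linarith
    then show ?thesis
      using 3 by simp
  next
    case 4
    have "log 2 (4::real) = 2"
      using log_nat_power[of 2 "2::real" 2] by simp
    moreover have "log 2 (4::real) \<le> log 2 (real d)"
      using 4 by simp
    ultimately have "2 * real d * 2 \<le> 2 * real d * log 2 (real d)"
      by (intro mult_left_mono) auto
    then show ?thesis
      using of_nat_0_le_iff[of d, where 'a = real] by argo
  qed simp_all
qed

lemma log2_choose_ge_pow:
  assumes "k \<le> M"
  shows "real k * log 2 (real M - real k + 1) - log 2 (fact k) \<le> log 2 (M choose k)"
proof -
  have base: "1 \<le> real M - real k + 1"
    using assms by simp
  have "(real M - real k + 1) ^ k = real ((M - k + 1) ^ k)"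
    using assms by (simp add: of_nat_diff add.commute)
  also have "\<dots> \<le> real ((M choose k) * fact k)"
    using pow_le_choose_mult_fact[OF assms] by (simp only: of_nat_le_iff)
  also have "\<dots> = real (M choose k) * fact k"
    by simp
  finally have "log 2 ((real M - real k + 1) ^ k) \<le> log 2 (real (M choose k) * fact k)"
    using base assms by (subst log_le_cancel_iff) auto
  then show ?thesis
    using base assms by (simp add: log_nat_power log_mult)
qed

lemma log2_choose_ge_ratio:
  assumes "1 \<le> k" and "k \<le> M"
  shows "real k * (log 2 (real M) - log 2 (real k)) \<le> log 2 (M choose k)"
proof -
  have "(real M / real k) ^ k \<le> real (M choose k)"
    by (rule binomial_ge_n_over_k_pow_k[OF assms(2)])
  then have "log 2 ((real M / real k) ^ k) \<le> log 2 (M choose k)"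
    using assms by (subst log_le_cancel_iff) auto
  then show ?thesis
    using assms by (simp add: log_nat_power log_divide)
qed

lemma log2_choose_coded_ge:
  assumes t: "1 \<le> t" and Q: "64 * real t \<le> Q" and m: "Q - 1 \<le> real m" and "2*t \<le> m"
  shows "2*real t*(log 2 Q + log 2 (31/32)) - (2*real t*(1 + log 2 t) - 2*real t*(1/ln 2) + (1 + log 2 t) + 1/ln 2)
    \<le> log 2 (m choose (2*t))"
proof -
  have "(31/32) * Q \<le> real m - real (2*t) + 1"
    using Q m by simp
  moreover have "0 < Q"
    using Q t by simp
  ultimately have "log 2 Q + log 2 (31/32) \<le> log 2 (real m - real (2*t) + 1)"
    by (subst log_mult_pos[symmetric]) (auto simp: mult.commute)
  then have "2*real t*(log 2 Q + log 2 (31/32)) \<le> real (2*t) * log 2 (real m - real (2*t) + 1)"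
    by (simp add: mult_left_mono)
  moreover have "log 2 (fact (2*t)) \<le> 2*real t*(1 + log 2 t) - 2*real t*(1/ln 2) + (1 + log 2 t) + 1/ln 2"
    using log2_fact_le[of "2*t"] t by (simp add: log_mult)
  ultimately show ?thesis
    using log2_choose_ge_pow[OF \<open>2*t \<le> m\<close>] by linarith
qed

lemma log2_choose_probe_ge:
  assumes t: "1 \<le> t" and Q: "64 * real t \<le> Q" and m': "Q/4 - 1 \<le> real m'" and "2*(t-1) \<le> m'"
  shows "(2*real t - 2)*(log 2 Q - 3 - (1 + log 2 t)) \<le> log 2 (m' choose (2*(t-1)))"
proof (cases "t = 1")
  case True
  then show ?thesis by simp
next
  case False
  define k where "k = 2*(t-1)"
  have k: "1 \<le> k" "k \<le> m'" "real k = 2*real t - 2"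
    using False t assms(4) unfolding k_def by (auto simp: of_nat_diff)
  have "log 2 (real k) \<le> log 2 (2 * real t)"
    using k t by (subst log_le_cancel_iff) auto
  also have "\<dots> = 1 + log 2 t"
    using t by (simp add: log_mult)
  finally have "log 2 (real k) \<le> 1 + log 2 t" .
  moreover have "log 2 Q - 3 \<le> log 2 (real m')"
  proof -
    have "Q / 8 \<le> real m'" "0 < Q"
      using Q m' t by simp_all
    then have "log 2 (Q / 8) \<le> log 2 (real m')"
      by (subst log_le_cancel_iff) auto
    moreover have "log 2 (Q / 8) = log 2 Q - 3"
      using \<open>0 < Q\<close> log_nat_power[of "2::real" 2 3] by (simp add: log_divide)
    ultimately show ?thesis by simp
  qed
  ultimately have "real k * (log 2 Q - 3 - (1 + log 2 t)) \<le> real k * (log 2 (real m') - log 2 (real k))"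
    by (intro mult_left_mono) auto
  then show ?thesis
    using log2_choose_ge_ratio[OF k(1,2)] k(3) unfolding k_def by simp
qed

lemma surplus_ge_linear_terms:
  fixes N T L lD lT lL lam ka X y z :: real
  assumes T: "1 \<le> T" and lD: "0 \<le> lD" and lT: "0 \<le> lT" and lL: "0 \<le> lL"
    and N_eq: "N = X + y + z" and y: "0 \<le> y" and z: "0 \<le> z"
  defines "tau \<equiv> 2*T*L - T*(4*lD + 2*lT + 2*lL + 1)"
  shows "2*T*lD*N + X*(T*(2*lam - 1 + 2*ka) - (1 + lT) - lam) - y*(2*L + 8*T) - 2*T*L*z \<le>
    X*(2*T*(L - lD - lL + ka) - (2*T*(1 + lT) - 2*T*lam + (1 + lT) + lam) - tau)
    + y*((2*T - 2)*(L - lD - lL - 3 - (1 + lT)) - tau) - z*tau"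
proof -
  have lower: "2*T*lD - 2*L - 8*T \<le> (2*T - 2)*(L - lD - lL - 3 - (1 + lT)) - tau"
  proof -
    have "(2*T - 2)*(L - lD - lL - 3 - (1 + lT)) - tau = -2*L + (2*T+2)*lD + 2*lL + 2*lT - 7*T + 8"
      unfolding tau_def by (simp add: algebra_simps)
    moreover have "2*T*lD \<le> (2*T+2)*lD"
      using lD by (simp add: algebra_simps)
    ultimately show ?thesis
      using lL lT T by linarith
  qed
  have upper: "2*T*lD - 2*T*L \<le> - tau"
  proof -
    have "- tau = -2*T*L + 4*T*lD + 2*T*lT + 2*T*lL + T"
      unfolding tau_def by (simp add: algebra_simps)
    moreover have "2*T*lD \<le> 4*T*lD" "0 \<le> 2*T*lT" "0 \<le> 2*T*lL"
      using lD lT lL T by auto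
    ultimately show ?thesis
      using T by linarith
  qed
  have "y*(2*T*lD - 2*L - 8*T) \<le> y*((2*T - 2)*(L - lD - lL - 3 - (1 + lT)) - tau)"
    using mult_left_mono[OF lower y] .
  moreover have "z*(2*T*lD - 2*T*L) \<le> z*(-tau)"
    using mult_left_mono[OF upper z] .
  moreover have "2*T*lD*N = X*(2*T*lD) + y*(2*T*lD) + z*(2*T*lD)"
    unfolding N_eq by (simp add: algebra_simps)
  moreover have coded: "2*T*(L - lD - lL + ka) - (2*T*(1 + lT) - 2*T*lam + (1 + lT) + lam) - tau
      = 2*T*lD + (T*(2*lam - 1 + 2*ka) - (1 + lT) - lam)"
    unfolding tau_def by (simp add: algebra_simps)
  ultimately show ?thesis
    unfolding coded by (simp add: algebra_simps)
qed

lemma linear_terms_ge: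
  fixes N T L lD lT lam ka X y z :: real
  assumes N: "0 < N" and T: "1 \<le> T" and L: "128 \<le> L" and lT: "0 \<le> lT" and lT_le: "1 + lT \<le> T"
    and lam: "36/25 \<le> lam" "lam \<le> 3/2" and ka: "-(1/10) \<le> ka" "ka \<le> 0"
    and N_eq: "N = X + y + z" and y: "0 \<le> y" "y \<le> N / L" and z: "0 \<le> z" "z \<le> N / (4*L)"
  shows "N*(2*T*lD - lam - 2) \<le> 2*T*lD*N + X*(T*(2*lam - 1 + 2*ka) - (1 + lT) - lam) - y*(2*L + 8*T) - 2*T*L*z"
proof -
  define f where "f = T*(2*lam - 1 + 2*ka) - (1 + lT) - lam"
  have "f \<le> 3*T"
  proof -
    have "T*(2*lam - 1 + 2*ka) \<le> T*2"
      using lam ka T by (intro mult_left_mono) auto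
    then show ?thesis
      unfolding f_def using lam lT T by linarith
  qed
  then have "(y + z)*f \<le> (y + z)*(3*T)"
    using y z by (intro mult_left_mono) auto
  moreover have "(y + z)*(3*T) \<le> (15/4)*T*N/L"
  proof -
    have "y + z \<le> (5/4)*(N/L)"
      using y z by (simp add: field_simps)
    then have "(y + z)*(3*T) \<le> (5/4)*(N/L)*(3*T)"
      using T by (intro mult_right_mono) auto
    then show ?thesis
      by (simp add: field_simps)
  qed
  moreover have "y*(2*L + 8*T) \<le> 2*N + 8*T*N/L"
  proof -
    have "y*(2*L + 8*T) \<le> (N/L)*(2*L + 8*T)"
      using y L T by (intro mult_right_mono) auto
    also have "\<dots> = 2*N + 8*T*N/L"
      using L by (simp add: field_simps)
    finally show ?thesis .
  qed
  moreover have "2*T*L*z \<le> T*N/2"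
  proof -
    have "2*T*L*z \<le> 2*T*L*(N/(4*L))"
      using z T L by (intro mult_left_mono) auto
    also have "\<dots> = T*N/2"
      using L by (simp add: field_simps)
    finally show ?thesis .
  qed
  moreover have "T*N/L \<le> T*N/128"
    using L N T by (intro divide_left_mono) (auto intro!: mult_pos_pos)
  \<comment> \<open>47/512 = (15/4 + 8)/128 collects the error terms, using N/L \<le> N/128.\<close>
  moreover have "N*(-lam) \<le> N*(f - T*(1/2 + 47/512))"
  proof -
    have "1 \<le> 2*lam - 1 + 2*ka - (1/2 + 47/512)"
      using lam ka by simp
    then have "T*1 \<le> T*(2*lam - 1 + 2*ka - (1/2 + 47/512))"
      using T by (intro mult_left_mono) auto
    then show ?thesis
      unfolding f_def using lT_le N by (intro mult_left_mono) (auto simp: algebra_simps)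
  qed
  moreover have "X*f = N*f - (y + z)*f"
    unfolding N_eq by (simp add: algebra_simps)
  ultimately show ?thesis
    unfolding f_def[symmetric] by (simp add: algebra_simps)
qed

text \<open>X coded vertices and y lower probes carry D codes each, whose logarithms are bounded below by
  A and B; F bounds log n!, lam stands for 1/ln 2 and ka for log 2 (31/32).\<close>

lemma counting_bound_arith:
  fixes N D T L lam lD lT lL X y z A B F ka :: real
  assumes N: "0 < N" and D: "1 \<le> D" and T: "1 \<le> T" and L: "128 \<le> L"
    and lD: "0 \<le> lD" and lT: "0 \<le> lT" and lL: "0 \<le> lL" and lT_le: "1 + lT \<le> T"
    and lam: "36/25 \<le> lam" "lam \<le> 3/2" and ka: "-(1/10) \<le> ka" "ka \<le> 0"
    and N_eq: "N = X + y + z" and X: "0 \<le> X" and y: "0 \<le> y" "y \<le> N / L" and z: "0 \<le> z" "z \<le> N / (4*L)"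
    and A: "2*T*(L - lD - lL + ka) - (2*T*(1 + lT) - 2*T*lam + (1 + lT) + lam) \<le> A"
    and B: "(2*T - 2)*(L - lD - lL - 3 - (1 + lT)) \<le> B"
    and F: "F \<le> N*L - N*lam + L + lam"
    and D_lD: "(7/2)*(D - 1) \<le> 2*D*lD"
  shows "(2*D*T - 1)*N*L - (4*N*lD + 2*N*lT + 2*N*lL + N)*D*T - 2*N - 2*L \<le> D*X*A + D*y*B - F"
proof -
  define tau where "tau = 2*T*L - T*(4*lD + 2*lT + 2*lL + 1)"
  define a where "a = 2*T*(L - lD - lL + ka) - (2*T*(1 + lT) - 2*T*lam + (1 + lT) + lam)"
  define b where "b = (2*T - 2)*(L - lD - lL - 3 - (1 + lT))"
  have "D*X*a \<le> D*X*A" "D*y*b \<le> D*y*B"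
    using A B D X y unfolding a_def b_def by (auto intro!: mult_left_mono)
  moreover have "D*(N*(2*T*lD - lam - 2)) \<le> D*X*a + D*y*b - N*(D*tau)"
  proof -
    let ?linear = "2*T*lD*N + X*(T*(2*lam - 1 + 2*ka) - (1 + lT) - lam) - y*(2*L + 8*T) - 2*T*L*z"
    have "?linear \<le> X*(a - tau) + y*(b - tau) - z*tau"
      unfolding a_def b_def tau_def by (rule surplus_ge_linear_terms[OF T lD lT lL N_eq y(1) z(1)])
    moreover have "N*(2*T*lD - lam - 2) \<le> ?linear"
      by (rule linear_terms_ge[OF N T L lT lT_le lam ka N_eq y z])
    ultimately have "D*(N*(2*T*lD - lam - 2)) \<le> D*(X*(a - tau) + y*(b - tau) - z*tau)"
      using D by (intro mult_left_mono) auto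
    then show ?thesis
      unfolding N_eq by (simp add: algebra_simps)
  qed
  moreover have "0 \<le> D*(N*(2*T*lD - lam - 2)) + 2*N + N*lam"
  proof -
    have "D*(N*(2*T*lD - lam - 2)) + 2*N + N*lam = N*(2*D*T*lD - (D - 1)*(lam + 2))"
      by (simp add: algebra_simps)
    moreover have "2*D*lD \<le> 2*D*T*lD"
      using T D lD by (simp add: mult_left_mono mult_right_mono)
    moreover have "(D - 1)*(lam + 2) \<le> (D - 1)*(7/2)"
      using D lam by (intro mult_left_mono) auto
    moreover have "0 \<le> 2*D*T*lD - (D - 1)*(lam + 2)"
      using calculation(2,3) D_lD by linarith
    ultimately show ?thesis
      using N by simp
  qed
  moreover have "(2*D*T - 1)*N*L - (4*N*lD + 2*N*lT + 2*N*lL + N)*D*T - 2*N - 2*L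
      = N*(D*tau) - N*L - 2*N - 2*L"
    unfolding tau_def by (simp add: algebra_simps)
  ultimately show ?thesis
    using F lam L by linarith
qed

lemma box_parameters_exist:
  fixes n t d :: nat and L Q :: real
  assumes t: "1 \<le> t" and d: "1 \<le> d" and L: "2 \<le> L" and large: "64 * real t * real d * L \<le> real n"
    and Q_def: "Q = real n / (real d * L)"
  obtains m m' where "Q - 1 \<le> real m" and "Q/4 - 1 \<le> real m'" and "2*t \<le> m" and "2*t \<le> m'"
    and "real d * real m \<le> real n / L" and "real d * real m' \<le> real n / (4*L)" and "d*m' + d*m \<le> n"
proof -
  define m m' where "m = nat \<lfloor>Q\<rfloor>" and "m' = nat \<lfloor>Q/4\<rfloor>"
  have "0 < 64 * real t * real d * L"
    using t d L by simp
  then have "0 < real n"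
    using large by linarith
  have Q: "64 * real t \<le> Q"
    using large d L unfolding Q_def by (simp add: field_simps)
  have m: "Q - 1 \<le> real m" "real m \<le> Q" and m': "Q/4 - 1 \<le> real m'" "real m' \<le> Q/4"
    using Q t unfolding m_def m'_def by linarith+
  have "2*t \<le> m" "2*t \<le> m'"
    using Q m(1) m'(1) t by linarith+
  have dQ: "real d * Q = real n / L"
    using d L unfolding Q_def by simp
  have y: "real d * real m \<le> real n / L"
    using mult_left_mono[OF m(2), of "real d"] dQ by simp
  have z: "real d * real m' \<le> real n / (4*L)"
    using mult_left_mono[OF m'(2), of "real d"] dQ by simp
  have "real n / L \<le> real n / 2"
    using L \<open>0 < real n\<close> by (intro divide_left_mono) auto
  moreover have "real n / (4*L) = (real n / L) / 4"
    by simp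
  ultimately have "real (d*m' + d*m) \<le> real n"
    unfolding of_nat_add of_nat_mult using y z \<open>0 < real n\<close> by linarith
  then have "d*m' + d*m \<le> n"
    by (simp only: of_nat_le_iff)
  with m(1) m'(1) \<open>2*t \<le> m\<close> \<open>2*t \<le> m'\<close> y z show thesis
    by (rule that)
qed

lemma log2_num_G_ge_at:
  fixes n t d :: nat
  assumes t: "1 \<le> t" and d: "1 \<le> d" and L: "128 \<le> log 2 (real n)"
    and large: "64 * real t * real d * log 2 (real n) \<le> real n"
  shows "(2 * real d * real t - 1) * real n * log 2 (real n)
      - (4 * real n * log 2 (real d) + 2 * real n * log 2 (real t)
         + 2 * real n * log 2 (log 2 (real n)) + real n) * real d * real t
      - 2 * real n - 2 * log 2 (real n) \<le> log 2 (real (num_G t d n))"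
proof -
  define L where "L = log 2 (real n)"
  define Q where "Q = real n / (real d * L)"
  have "2 \<le> L" "64 * real t * real d * L \<le> real n"
    using L large unfolding L_def by simp_all
  then obtain m m' where m: "Q - 1 \<le> real m" and m': "Q/4 - 1 \<le> real m'"
    and "2*t \<le> m" "2*t \<le> m'" and y: "real d * real m \<le> real n / L"
    and z: "real d * real m' \<le> real n / (4*L)" and fits: "d*m' + d*m \<le> n"
    using box_parameters_exist[OF t d _ _ Q_def] by blast
  have "0 < L" "0 < real n"
    using L unfolding L_def by (auto simp: log_def intro!: Nat.gr0I)
  have Q: "64 * real t \<le> Q"
    using large d \<open>0 < L\<close> unfolding Q_def L_def by (simp add: field_simps)
  interpret box_construction t d m m' n
    using t d fits \<open>2*t \<le> m\<close> by unfold_locales auto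
  have logQ: "log 2 Q = L - log 2 (real d) - log 2 L"
    using \<open>0 < L\<close> \<open>0 < real n\<close> d unfolding Q_def by (simp add: log_divide log_mult L_def[symmetric])
  have A: "2*real t*(L - log 2 (real d) - log 2 L + log 2 (31/32))
      - (2*real t*(1 + log 2 (real t)) - 2*real t*(1/ln 2) + (1 + log 2 (real t)) + 1/ln 2)
      \<le> log 2 (m choose (2*t))"
    using log2_choose_coded_ge[OF t Q m(1) \<open>2*t \<le> m\<close>] unfolding logQ .
  have B: "(2*real t - 2)*(L - log 2 (real d) - log 2 L - 3 - (1 + log 2 (real t)))
      \<le> log 2 (m' choose (2*(t-1)))"
    using log2_choose_probe_ge[OF t Q m'(1)] \<open>2*t \<le> m'\<close> unfolding logQ by simp
  have F: "log 2 (fact n) \<le> real n * L - real n * (1/ln 2) + L + 1/ln 2"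
    using log2_fact_le[of n] \<open>0 < real n\<close> unfolding L_def by simp
  have N_eq: "real n = real (n - (d*m' + d*m)) + real d * real m + real d * real m'"
    using fits by (simp add: of_nat_diff)
  have "0 \<le> log 2 L"
    using L[folded L_def] by simp
  from counting_bound_arith[OF \<open>0 < real n\<close> _ _ L[folded L_def] _ _ this one_plus_log2_le[OF t]
      inv_ln2_bounds log2_31_32_ge _ N_eq _ _ y _ z A B F log2_dimension_bound[OF d]]
  have "(2 * real d * real t - 1) * real n * L
      - (4 * real n * log 2 (real d) + 2 * real n * log 2 (real t) + 2 * real n * log 2 L + real n) * real d * real t
      - 2 * real n - 2 * L
      \<le> real d * real (n - (d*m' + d*m)) * log 2 (m choose (2*t))
        + real d * (real d * real m) * log 2 (m' choose (2*(t-1))) - log 2 (fact n)"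
    using t d by simp
  also have "\<dots> \<le> log 2 (num_G t d n)"
    using log2_num_G_ge[OF \<open>2*t \<le> m\<close>] \<open>2*t \<le> m'\<close> unfolding of_nat_mult by (simp add: ac_simps)
  finally show ?thesis
    unfolding L_def .
qed

lemma eventually_parameters_small:
  fixes t d :: "nat \<Rightarrow> nat"
  assumes d: "\<And>n. 1 \<le> d n"
    and small: "(\<lambda>n. real (t n * (d n)\<^sup>2)) \<in> o(\<lambda>n. real n / log 2 (real n))"
  shows "\<forall>\<^sub>F n in at_top. 128 \<le> log 2 (real n) \<and> 64 * real (t n) * real (d n) * log 2 (real n) \<le> real n"
proof -
  have "\<forall>\<^sub>F n in at_top. 2 ^ 128 \<le> (n::nat)"
    by (rule eventually_ge_at_top)
  then have "\<forall>\<^sub>F n in at_top. 128 \<le> log 2 (real n)"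
  proof eventually_elim
    case (elim n)
    then have "2 powr 128 \<le> real n"
      by (simp add: powr_realpow flip: of_nat_le_iff)
    then show ?case
      by (subst le_log_iff) auto
  qed
  moreover have "\<forall>\<^sub>F n in at_top. norm (real (t n * (d n)\<^sup>2)) \<le> (1/64) * norm (real n / log 2 (real n))"
    using landau_o.smallD[OF small, of "1/64"] by simp
  ultimately show ?thesis
  proof eventually_elim
    case (elim n)
    define L where "L = log 2 (real n)"
    have L: "128 \<le> L" and td: "real (t n) * (real (d n))\<^sup>2 \<le> real n / L / 64"
      using elim unfolding L_def by auto
    have "real (d n) \<le> (real (d n))\<^sup>2"
      using d[of n] by (simp add: power2_eq_square)
    then have "64 * real (t n) * real (d n) * L \<le> 64 * (real (t n) * (real (d n))\<^sup>2) * L"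
      using L by (simp add: mult_left_mono mult_right_mono)
    also have "\<dots> \<le> real n"
      using td L by (simp add: field_simps)
    finally show ?case
      using L unfolding L_def by simp
  qed
qed

theorem theorem1:
  fixes t d :: "nat \<Rightarrow> nat"
  assumes "\<And>n. t n \<ge> 1" and "\<And>n. d n \<ge> 1"
    and "(\<lambda>n. real (t n * (d n)\<^sup>2)) \<in> o(\<lambda>n. real n / log 2 (real n))"
  shows "\<exists>C::real. \<forall>\<^sub>F n in at_top.
    log 2 (real (num_G (t n) (d n) n)) \<ge>
      (2 * real (d n) * real (t n) - 1) * real n * log 2 (real n)
      - (4 * real n * log 2 (real (d n)) + 2 * real n * log 2 (real (t n))
         + 2 * real n * log 2 (log 2 (real n)) + real n) * real (d n) * real (t n)
      - 2 * real n - C * log 2 (real n)"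
proof (intro exI[of _ 2])
  show "\<forall>\<^sub>F n in at_top.
    log 2 (real (num_G (t n) (d n) n)) \<ge>
      (2 * real (d n) * real (t n) - 1) * real n * log 2 (real n)
      - (4 * real n * log 2 (real (d n)) + 2 * real n * log 2 (real (t n))
         + 2 * real n * log 2 (log 2 (real n)) + real n) * real (d n) * real (t n)
      - 2 * real n - 2 * log 2 (real n)"
    using eventually_parameters_small[OF assms(2,3)]
    by eventually_elim (use log2_num_G_ge_at[OF assms(1,2)] in blast)
qed

end
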